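(* Let $(X_i)_{i\in\mathbb{Z}}$ be a stationary strongly nonergodic process over a finite alphabet $\mathbb{X}$, with associated IID binary process $(Z_k)_{k\in\mathbb{N}}$ ($P(Z_k=0)=P(Z_k=1)=\tfrac12$) and functions $s_k:\mathbb{X}^*\to\{0,1\}$ satisfying $\lim_{n\to\infty}P(s_k(X_{t+1:t+n})=Z_k)=1$ for all $k\in\mathbb{N}$, $t\in\mathbb{Z}$. Let $\delta\in(\tfrac12,1)$, $U_\delta(n):=\{k\in\mathbb{N}:P(s_k(X_{1:n})=Z_k)\ge\delta\}$ and $$H^U(n):=hn+[\log2-\eta(\delta)]\operatorname{card}U_\delta(n),\qquad \eta(p):=-p\log p-(1-p)\log(1-p).$$ Then $H(n)\ge H^U(n)$ for all $n$, and $$\lim_{n\to\infty}H(n)/n=h=\lim_{n\to\infty}H^U(n)/n.$$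
   Context: $H(n):=H(X_{t+1:t+n})=-\mathbb{E}\log P(X_{t+1:t+n})$ (natural log), $h:=\lim_n H(n)/n$ is the entropy rate. A process is strongly nonergodic if such $(Z_k)$ and $s_k$ as in the claim exist. *)

theory Defs
  imports "HOL-Probability.Probability"
begin

definition block :: "(int \<Rightarrow> 'w \<Rightarrow> 'a) \<Rightarrow> int \<Rightarrow> nat \<Rightarrow> 'w \<Rightarrow> 'a list" where
  "block X t n \<omega> = map (\<lambda>i. X (t + int i) \<omega>) [1..<n+1]"

definition stationary :: "'w measure \<Rightarrow> (int \<Rightarrow> 'w \<Rightarrow> 'a) \<Rightarrow> bool" where
  "stationary M X \<longleftrightarrow> (\<forall>t n A. measure M {\<omega>\<in>space M. block X t n \<omega> \<in> A}
                                 = measure M {\<omega>\<in>space M. block X 0 n \<omega> \<in> A})"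

definition block_entropy :: "'w measure \<Rightarrow> (int \<Rightarrow> 'w \<Rightarrow> 'a) \<Rightarrow> nat \<Rightarrow> real" where
  "block_entropy M X n =
     - (\<integral>\<omega>. ln (measure M {\<omega>'\<in>space M. block X 0 n \<omega>' = block X 0 n \<omega>}) \<partial>M)"

definition entropy_rate :: "'w measure \<Rightarrow> (int \<Rightarrow> 'w \<Rightarrow> 'a) \<Rightarrow> real" where
  "entropy_rate M X = lim (\<lambda>n. block_entropy M X n / real n)"

definition bin_entropy :: "real \<Rightarrow> real" where
  "bin_entropy p = - p * ln p - (1 - p) * ln (1 - p)"

definition U_delta :: "'w measure \<Rightarrow> (int \<Rightarrow> 'w \<Rightarrow> 'a) \<Rightarrow> (nat \<Rightarrow> 'w \<Rightarrow> bool)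
    \<Rightarrow> (nat \<Rightarrow> 'a list \<Rightarrow> bool) \<Rightarrow> real \<Rightarrow> nat \<Rightarrow> nat set" where
  "U_delta M X Z s \<delta> n = {k. measure M {\<omega>\<in>space M. s k (block X 0 n \<omega>) = Z k \<omega>} \<ge> \<delta>}"

definition HU :: "'w measure \<Rightarrow> (int \<Rightarrow> 'w \<Rightarrow> 'a) \<Rightarrow> (nat \<Rightarrow> 'w \<Rightarrow> bool)
    \<Rightarrow> (nat \<Rightarrow> 'a list \<Rightarrow> bool) \<Rightarrow> real \<Rightarrow> nat \<Rightarrow> real" where
  "HU M X Z s \<delta> n = entropy_rate M X * real n
      + (ln 2 - bin_entropy \<delta>) * real (card (U_delta M X Z s \<delta> n))"

end

theory Submission
  imports Defs "HOL-Real_Asymp.Real_Asymp"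
begin

text \<open>
  By submodularity of entropy, the block entropy H(n) of a stationary process is nondecreasing and
  concave; hence H(n)/n converges to h and H(m + n) - H(m) \<ge> n h.

  Let F \<subseteq> U_\<delta>(n) be finite and Z_F the vector of the fair bits indexed by F, so that
  H(Z_F) = |F| log 2. Writing A = X_{1:n} and B = X_{n+1:n+m}, submodularity gives
  H(A | B) + H(Z_F) \<le> H(A) + H(Z_F | A) + H(Z_F | B), and H(A | B) \<ge> n h.
  Predicting Z_k by s_k is a binary guess, so the binary Fano inequality bounds H(Z_F | A) by
  |F| \<eta>(\<delta>) and H(Z_F | B) by a sum of \<eta>(error probability) that vanishes as m \<rightarrow> \<infinity>. Hence
  |F| (log 2 - \<eta>(\<delta>)) \<le> H(n) - n h. Since \<eta>(\<delta>) < log 2, the set U_\<delta>(n) is finite and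
  H(n) \<ge> H^U(n); then h \<le> H^U(n)/n \<le> H(n)/n gives the limit of H^U(n)/n.
\<close>

section \<open>Entropy of finite-valued random variables\<close>

lemma gibbs_inequality:
  fixes p q :: "'i \<Rightarrow> real"
  assumes "finite I" and p: "\<And>i. i \<in> I \<Longrightarrow> 0 \<le> p i" and q: "\<And>i. i \<in> I \<Longrightarrow> 0 \<le> q i"
    and supp: "\<And>i. i \<in> I \<Longrightarrow> 0 < p i \<Longrightarrow> 0 < q i" and mass: "sum q I \<le> sum p I"
  shows "(\<Sum>i\<in>I. p i * ln (q i)) \<le> (\<Sum>i\<in>I. p i * ln (p i))"
proof -
  have "p i * ln (q i) - p i * ln (p i) \<le> q i - p i" if i: "i \<in> I" for i
  proof (cases "p i = 0")
    case True
    then show ?thesis using q[OF i] by simp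
  next
    case False
    then have pos: "0 < p i" "0 < q i" using p[OF i] supp[OF i] by auto
    have "ln (q i / p i) \<le> q i / p i - 1" using pos by (intro ln_le_minus_one) simp
    then have "p i * ln (q i / p i) \<le> p i * (q i / p i - 1)" using pos by (intro mult_left_mono) auto
    then show ?thesis using pos by (simp add: ln_div algebra_simps)
  qed
  then have "(\<Sum>i\<in>I. p i * ln (q i) - p i * ln (p i)) \<le> (\<Sum>i\<in>I. q i - p i)" by (rule sum_mono)
  then show ?thesis using mass by (simp add: sum_subtractf)
qed

lemma sum_coupling_mass:
  fixes p :: "'a \<Rightarrow> 'b \<Rightarrow> 'c \<Rightarrow> real"
  assumes pac: "\<And>a c. pac a c = (\<Sum>b\<in>B. p a b c)"
    and pbc: "\<And>b c. pbc b c = (\<Sum>a\<in>A. p a b c)"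
    and pc: "\<And>c. pc c = (\<Sum>a\<in>A. \<Sum>b\<in>B. p a b c)"
  shows "(\<Sum>a\<in>A. \<Sum>b\<in>B. \<Sum>c\<in>C. pac a c * pbc b c / pc c) = (\<Sum>a\<in>A. \<Sum>b\<in>B. \<Sum>c\<in>C. p a b c)"
proof -
  have pc_ac: "pc c = (\<Sum>a\<in>A. pac a c)" for c using pc pac by simp
  have pc_bc: "pc c = (\<Sum>b\<in>B. pbc b c)" for c unfolding pc pbc by (rule sum.swap)
  have "(\<Sum>a\<in>A. \<Sum>b\<in>B. \<Sum>c\<in>C. pac a c * pbc b c / pc c) = (\<Sum>a\<in>A. \<Sum>c\<in>C. \<Sum>b\<in>B. pac a c * pbc b c / pc c)"
    by (rule sum.cong[OF refl], rule sum.swap)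
  also have "\<dots> = (\<Sum>c\<in>C. \<Sum>a\<in>A. \<Sum>b\<in>B. pac a c * pbc b c / pc c)"
    by (rule sum.swap)
  also have "\<dots> = (\<Sum>c\<in>C. (\<Sum>a\<in>A. pac a c) * (\<Sum>b\<in>B. pbc b c) / pc c)"
    by (simp add: sum_product sum_divide_distrib)
  also have "\<dots> = (\<Sum>c\<in>C. pc c)"
    by (simp flip: pc_ac pc_bc)
  also have "\<dots> = (\<Sum>a\<in>A. \<Sum>b\<in>B. \<Sum>c\<in>C. p a b c)"
    unfolding pc by (subst sum.swap) (rule sum.cong[OF refl], rule sum.swap)
  finally show ?thesis .
qed

text \<open>
  Shannon's inequality H(X,Y,Z) + H(Z) \<le> H(X,Z) + H(Y,Z) in coordinates: Gibbs' inequality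
  compares p with the coupling q = pac pbc / pc, under which the first two coordinates are
  conditionally independent given the third.
\<close>

lemma sum_xlnx_submodular:
  fixes p :: "'a \<Rightarrow> 'b \<Rightarrow> 'c \<Rightarrow> real"
  assumes fin: "finite A" "finite B" "finite C"
    and nn: "\<And>a b c. 0 \<le> p a b c"
    and pac: "\<And>a c. pac a c = (\<Sum>b\<in>B. p a b c)"
    and pbc: "\<And>b c. pbc b c = (\<Sum>a\<in>A. p a b c)"
    and pc: "\<And>c. pc c = (\<Sum>a\<in>A. \<Sum>b\<in>B. p a b c)"
  shows "(\<Sum>a\<in>A. \<Sum>c\<in>C. pac a c * ln (pac a c)) + (\<Sum>b\<in>B. \<Sum>c\<in>C. pbc b c * ln (pbc b c))
       \<le> (\<Sum>a\<in>A. \<Sum>b\<in>B. \<Sum>c\<in>C. p a b c * ln (p a b c)) + (\<Sum>c\<in>C. pc c * ln (pc c))"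
proof -
  define q where "q a b c = pac a c * pbc b c / pc c" for a b c
  have pc_ac: "pc c = (\<Sum>a\<in>A. pac a c)" for c using pc pac by simp
  have le_pac: "p a b c \<le> pac a c" if "b \<in> B" for a b c
    unfolding pac using fin nn that by (intro member_le_sum) auto
  have le_pbc: "p a b c \<le> pbc b c" if "a \<in> A" for a b c
    unfolding pbc using fin nn that by (intro member_le_sum) auto
  have le_pc: "pac a c \<le> pc c" if "a \<in> A" for a c
    unfolding pc_ac using fin nn that by (intro member_le_sum) (auto simp: pac intro!: sum_nonneg)
  have mass: "(\<Sum>a\<in>A. \<Sum>b\<in>B. \<Sum>c\<in>C. q a b c) = (\<Sum>a\<in>A. \<Sum>b\<in>B. \<Sum>c\<in>C. p a b c)"
    unfolding q_def using pac pbc pc by (rule sum_coupling_mass)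
  have q_nonneg: "0 \<le> q a b c" if "a \<in> A" "b \<in> B" for a b c
    using that le_pc[of a c] le_pac[of b a c] le_pbc[of a b c] nn[of a b c] unfolding q_def by simp
  have q_pos: "0 < q a b c" if "a \<in> A" "b \<in> B" "0 < p a b c" for a b c
    using that le_pc[of a c] le_pac[of b a c] le_pbc[of a b c] unfolding q_def by simp
  have gibbs: "(\<Sum>a\<in>A. \<Sum>b\<in>B. \<Sum>c\<in>C. p a b c * ln (q a b c))
      \<le> (\<Sum>a\<in>A. \<Sum>b\<in>B. \<Sum>c\<in>C. p a b c * ln (p a b c))"
  proof -
    have "(\<Sum>(a, b, c)\<in>A \<times> B \<times> C. q a b c) \<le> (\<Sum>(a, b, c)\<in>A \<times> B \<times> C. p a b c)"
      using mass by (simp add: sum.cartesian_product)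
    then have "(\<Sum>i\<in>A \<times> B \<times> C. (\<lambda>(a, b, c). p a b c) i * ln ((\<lambda>(a, b, c). q a b c) i))
        \<le> (\<Sum>i\<in>A \<times> B \<times> C. (\<lambda>(a, b, c). p a b c) i * ln ((\<lambda>(a, b, c). p a b c) i))"
      using fin nn q_nonneg q_pos by (intro gibbs_inequality) auto
    then show ?thesis by (simp add: sum.cartesian_product split_beta)
  qed
  have log_split: "p a b c * ln (q a b c) = p a b c * ln (pac a c) + p a b c * ln (pbc b c) - p a b c * ln (pc c)"
    if "a \<in> A" "b \<in> B" for a b c
  proof (cases "p a b c = 0")
    case False
    then have "0 < p a b c" using nn[of a b c] by simp
    then have "0 < pac a c" "0 < pbc b c" "0 < pc c"
      using that le_pc[of a c] le_pac[of b a c] le_pbc[of a b c] by linarith+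
    then show ?thesis by (simp add: q_def ln_div ln_mult algebra_simps)
  qed simp
  have s1: "(\<Sum>a\<in>A. \<Sum>b\<in>B. \<Sum>c\<in>C. p a b c * ln (pac a c)) = (\<Sum>a\<in>A. \<Sum>c\<in>C. pac a c * ln (pac a c))"
    by (rule sum.cong[OF refl], subst sum.swap) (simp add: pac sum_distrib_right)
  have s2: "(\<Sum>a\<in>A. \<Sum>b\<in>B. \<Sum>c\<in>C. p a b c * ln (pbc b c)) = (\<Sum>b\<in>B. \<Sum>c\<in>C. pbc b c * ln (pbc b c))"
    by (subst sum.swap) (rule sum.cong[OF refl], subst sum.swap, simp add: pbc sum_distrib_right)
  have s3: "(\<Sum>a\<in>A. \<Sum>b\<in>B. \<Sum>c\<in>C. p a b c * ln (pc c)) = (\<Sum>c\<in>C. pc c * ln (pc c))"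
  proof -
    have "(\<Sum>a\<in>A. \<Sum>b\<in>B. \<Sum>c\<in>C. p a b c * ln (pc c)) = (\<Sum>a\<in>A. \<Sum>c\<in>C. pac a c * ln (pc c))"
      by (rule sum.cong[OF refl], subst sum.swap) (simp add: pac sum_distrib_right)
    also have "\<dots> = (\<Sum>c\<in>C. pc c * ln (pc c))"
      by (subst sum.swap) (simp add: pc_ac sum_distrib_right)
    finally show ?thesis .
  qed
  have "(\<Sum>a\<in>A. \<Sum>b\<in>B. \<Sum>c\<in>C. p a b c * ln (q a b c))
      = (\<Sum>a\<in>A. \<Sum>b\<in>B. \<Sum>c\<in>C. p a b c * ln (pac a c)) + (\<Sum>a\<in>A. \<Sum>b\<in>B. \<Sum>c\<in>C. p a b c * ln (pbc b c))
        - (\<Sum>a\<in>A. \<Sum>b\<in>B. \<Sum>c\<in>C. p a b c * ln (pc c))"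
    by (simp add: log_split sum.distrib sum_subtractf)
  then show ?thesis using gibbs s1 s2 s3 by linarith
qed

lemma map_eq_iff_map_of_zip:
  assumes "distinct ks" "length v = length ks"
  shows "map f ks = v \<longleftrightarrow> (\<forall>k\<in>set ks. f k = the (map_of (zip ks v) k))"
  using assms
proof (induction ks arbitrary: v)
  case (Cons k ks)
  then obtain b w where "v = b # w" "length w = length ks" by (cases v) auto
  with Cons show ?case by (auto split: if_splits)
qed simp

definition point_prob :: "'w measure \<Rightarrow> ('w \<Rightarrow> 'b) \<Rightarrow> 'b \<Rightarrow> real" where
  "point_prob M f x = measure M {\<omega>\<in>space M. f \<omega> = x}"

definition finite_rv :: "'w measure \<Rightarrow> ('w \<Rightarrow> 'b) \<Rightarrow> bool" where
  "finite_rv M f \<longleftrightarrow> finite (f ` space M) \<and> (\<forall>x. {\<omega>\<in>space M. f \<omega> = x} \<in> sets M)"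

definition discrete_entropy :: "'w measure \<Rightarrow> ('w \<Rightarrow> 'b) \<Rightarrow> real" where
  "discrete_entropy M f = - (\<Sum>x\<in>f ` space M. point_prob M f x * ln (point_prob M f x))"

definition discrete_cond_entropy :: "'w measure \<Rightarrow> ('w \<Rightarrow> 'b) \<Rightarrow> ('w \<Rightarrow> 'c) \<Rightarrow> real" where
  "discrete_cond_entropy M f g = discrete_entropy M (\<lambda>\<omega>. (f \<omega>, g \<omega>)) - discrete_entropy M g"

context prob_space
begin

lemma finite_rv_sets: "finite_rv M f \<Longrightarrow> {\<omega>\<in>space M. f \<omega> = x} \<in> events"
  by (simp add: finite_rv_def)

lemma finite_rv_finite_range: "finite_rv M f \<Longrightarrow> finite (f ` space M)"
  by (simp add: finite_rv_def)

lemma finite_rv_measurable: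
  fixes f :: "'a \<Rightarrow> 'b::finite"
  assumes "f \<in> M \<rightarrow>\<^sub>M count_space UNIV"
  shows "finite_rv M f"
proof -
  have "{\<omega>\<in>space M. f \<omega> = x} = f -` {x} \<inter> space M" for x by auto
  then show ?thesis using measurable_sets[OF assms, of "{x}" for x] unfolding finite_rv_def by auto
qed

lemma finite_rv_pair:
  assumes f: "finite_rv M f" and g: "finite_rv M g"
  shows "finite_rv M (\<lambda>\<omega>. (f \<omega>, g \<omega>))"
proof -
  have "(\<lambda>\<omega>. (f \<omega>, g \<omega>)) ` space M \<subseteq> f ` space M \<times> g ` space M" by auto
  then have "finite ((\<lambda>\<omega>. (f \<omega>, g \<omega>)) ` space M)"
    using finite_subset finite_cartesian_product[OF finite_rv_finite_range[OF f] finite_rv_finite_range[OF g]]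
    by blast
  moreover have "{\<omega>\<in>space M. (f \<omega>, g \<omega>) = x} = {\<omega>\<in>space M. f \<omega> = fst x} \<inter> {\<omega>\<in>space M. g \<omega> = snd x}" for x
    by (cases x) auto
  ultimately show ?thesis
    using sets.Int[OF finite_rv_sets[OF f] finite_rv_sets[OF g]] by (simp add: finite_rv_def)
qed

lemma finite_rv_comp:
  assumes f: "finite_rv M f"
  shows "finite_rv M (\<lambda>\<omega>. g (f \<omega>))"
proof -
  have "(\<lambda>\<omega>. g (f \<omega>)) ` space M = g ` f ` space M" by auto
  moreover have "{\<omega>\<in>space M. g (f \<omega>) = x} = (\<Union>y\<in>{y\<in>f ` space M. g y = x}. {\<omega>\<in>space M. f \<omega> = y})" for x
    by auto
  ultimately show ?thesis
    using finite_rv_sets[OF f] finite_rv_finite_range[OF f] by (auto simp: finite_rv_def)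
qed

lemma finite_rv_const: "finite_rv M (\<lambda>\<omega>. c)"
proof -
  have "{\<omega>\<in>space M. c = x} \<in> events" for x by (cases "c = x") auto
  then show ?thesis by (simp add: finite_rv_def image_constant_conv)
qed

lemma finite_rv_map:
  assumes "\<And>k. finite_rv M (Z k)"
  shows "finite_rv M (\<lambda>\<omega>. map (\<lambda>k. Z k \<omega>) ks)"
proof (induction ks)
  case Nil
  show ?case using finite_rv_const[of "[]"] by simp
next
  case (Cons k ks)
  show ?case using finite_rv_comp[OF finite_rv_pair[OF assms Cons.IH], of "\<lambda>(z, r). z # r"] by simp
qed

lemma point_prob_nonneg [simp]: "0 \<le> point_prob M f x"
  by (simp add: point_prob_def)

lemma point_prob_outside_range: "x \<notin> f ` space M \<Longrightarrow> point_prob M f x = 0"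
  by (auto simp: point_prob_def intro!: arg_cong[where f="measure M", THEN trans[OF _ measure_empty]])

lemma point_prob_marginal:
  assumes f: "finite_rv M f" and g: "finite_rv M g" and S: "finite S" "g ` space M \<subseteq> S"
  shows "point_prob M f x = (\<Sum>y\<in>S. point_prob M (\<lambda>\<omega>. (f \<omega>, g \<omega>)) (x, y))"
proof -
  have "{\<omega>\<in>space M. f \<omega> = x} = (\<Union>y\<in>S. {\<omega>\<in>space M. (f \<omega>, g \<omega>) = (x, y)})"
    using S by auto
  moreover have "measure M (\<Union>y\<in>S. {\<omega>\<in>space M. (f \<omega>, g \<omega>) = (x, y)})
      = (\<Sum>y\<in>S. measure M {\<omega>\<in>space M. (f \<omega>, g \<omega>) = (x, y)})"
    using finite_rv_sets[OF finite_rv_pair[OF f g]] S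
    by (intro measure_finite_Union) (auto simp: disjoint_family_on_def emeasure_eq_measure)
  ultimately show ?thesis by (simp add: point_prob_def)
qed

lemma sum_point_prob:
  assumes f: "finite_rv M f" and S: "finite S" "f ` space M \<subseteq> S"
  shows "(\<Sum>x\<in>S. point_prob M f x) = 1"
proof -
  have "1 = point_prob M (\<lambda>\<omega>. ()) ()" by (simp add: point_prob_def prob_space)
  also have "\<dots> = (\<Sum>x\<in>S. point_prob M (\<lambda>\<omega>. ((), f \<omega>)) ((), x))"
    by (rule point_prob_marginal[OF finite_rv_const f S])
  finally show ?thesis by (simp add: point_prob_def)
qed

lemma integral_finite_rv:
  assumes f: "finite_rv M f"
  shows "(\<integral>\<omega>. \<phi> (f \<omega>) \<partial>M) = (\<Sum>x\<in>f ` space M. point_prob M f x * \<phi> x)"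
proof -
  have "\<phi> (f \<omega>) = (\<Sum>x\<in>f ` space M. indicator {\<omega>\<in>space M. f \<omega> = x} \<omega> * \<phi> x)" if "\<omega> \<in> space M" for \<omega>
    using that finite_rv_finite_range[OF f]
    by (simp add: indicator_def if_distrib cong: if_cong)
  then have "(\<integral>\<omega>. \<phi> (f \<omega>) \<partial>M) = (\<integral>\<omega>. (\<Sum>x\<in>f ` space M. indicator {\<omega>\<in>space M. f \<omega> = x} \<omega> * \<phi> x) \<partial>M)"
    by (rule Bochner_Integration.integral_cong[OF refl])
  also have "\<dots> = (\<Sum>x\<in>f ` space M. point_prob M f x * \<phi> x)"
    using finite_rv_sets[OF f]
    by (subst Bochner_Integration.integral_sum)
       (auto simp: point_prob_def emeasure_eq_measure)
  finally show ?thesis .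
qed

lemma discrete_entropy_superset:
  assumes "finite S" "f ` space M \<subseteq> S"
  shows "discrete_entropy M f = - (\<Sum>x\<in>S. point_prob M f x * ln (point_prob M f x))"
  unfolding discrete_entropy_def
  by (rule arg_cong[where f=uminus], rule sum.mono_neutral_left) (use assms point_prob_outside_range in auto)

lemma discrete_entropy_inj:
  assumes f: "finite_rv M f" and inj: "inj_on g (f ` space M)"
    and h: "\<And>\<omega>. \<omega> \<in> space M \<Longrightarrow> h \<omega> = g (f \<omega>)"
  shows "discrete_entropy M h = discrete_entropy M f"
proof -
  have range: "h ` space M = g ` f ` space M" using h by (auto simp: image_image)
  have "point_prob M h (g x) = point_prob M f x" if "x \<in> f ` space M" for x
  proof -
    have "{\<omega>\<in>space M. h \<omega> = g x} = {\<omega>\<in>space M. f \<omega> = x}"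
      using inj that h by (auto simp: inj_on_def)
    then show ?thesis by (simp add: point_prob_def)
  qed
  then show ?thesis
    unfolding discrete_entropy_def range by (simp add: sum.reindex[OF inj])
qed

lemma discrete_entropy_swap:
  assumes "finite_rv M f" "finite_rv M g"
  shows "discrete_entropy M (\<lambda>\<omega>. (g \<omega>, f \<omega>)) = discrete_entropy M (\<lambda>\<omega>. (f \<omega>, g \<omega>))"
  by (rule discrete_entropy_inj[OF finite_rv_pair[OF assms], where g="\<lambda>(x, y). (y, x)"])
     (auto simp: inj_on_def)

lemma discrete_entropy_const: "discrete_entropy M (\<lambda>\<omega>. c) = 0"
  using discrete_entropy_superset[of "{c}" "\<lambda>\<omega>. c"] by (auto simp: point_prob_def prob_space)

lemma discrete_entropy_bool:
  fixes f :: "'a \<Rightarrow> bool"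
  assumes f: "finite_rv M f"
  shows "discrete_entropy M f = bin_entropy (point_prob M f True)"
proof -
  have "point_prob M f False = 1 - point_prob M f True"
    using sum_point_prob[OF f finite_class.finite_UNIV subset_UNIV] by (simp add: UNIV_bool)
  then show ?thesis
    using discrete_entropy_superset[OF finite_class.finite_UNIV subset_UNIV, of f] by (simp add: UNIV_bool bin_entropy_def)
qed

lemma discrete_entropy_submodular:
  assumes X: "finite_rv M X" and Y: "finite_rv M Y" and Z: "finite_rv M Z"
  shows "discrete_entropy M (\<lambda>\<omega>. (X \<omega>, Y \<omega>, Z \<omega>)) + discrete_entropy M Z
    \<le> discrete_entropy M (\<lambda>\<omega>. (X \<omega>, Z \<omega>)) + discrete_entropy M (\<lambda>\<omega>. (Y \<omega>, Z \<omega>))"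
proof -
  define A B C where "A = X ` space M" and "B = Y ` space M" and "C = Z ` space M"
  have fin: "finite A" "finite B" "finite C"
    using X Y Z by (auto simp: A_def B_def C_def finite_rv_finite_range)
  define p where "p a b c = point_prob M (\<lambda>\<omega>. (X \<omega>, Y \<omega>, Z \<omega>)) (a, b, c)" for a b c
  define pac where "pac a c = point_prob M (\<lambda>\<omega>. (X \<omega>, Z \<omega>)) (a, c)" for a c
  define pbc where "pbc b c = point_prob M (\<lambda>\<omega>. (Y \<omega>, Z \<omega>)) (b, c)" for b c
  define pc where "pc c = point_prob M Z c" for c
  have pac_eq: "pac a c = (\<Sum>b\<in>B. p a b c)" for a c
  proof -
    have "pac a c = (\<Sum>b\<in>B. point_prob M (\<lambda>\<omega>. ((X \<omega>, Z \<omega>), Y \<omega>)) ((a, c), b))"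
      unfolding pac_def by (rule point_prob_marginal[OF finite_rv_pair[OF X Z] Y]) (use fin B_def in auto)
    then show ?thesis
      unfolding p_def point_prob_def by (simp add: conj_commute conj_left_commute)
  qed
  have pbc_eq: "pbc b c = (\<Sum>a\<in>A. p a b c)" for b c
  proof -
    have "pbc b c = (\<Sum>a\<in>A. point_prob M (\<lambda>\<omega>. ((Y \<omega>, Z \<omega>), X \<omega>)) ((b, c), a))"
      unfolding pbc_def by (rule point_prob_marginal[OF finite_rv_pair[OF Y Z] X]) (use fin A_def in auto)
    then show ?thesis
      unfolding p_def point_prob_def by (simp add: conj_commute conj_left_commute)
  qed
  have pc_eq: "pc c = (\<Sum>a\<in>A. \<Sum>b\<in>B. p a b c)" for c
  proof -
    have "pc c = (\<Sum>a\<in>A. point_prob M (\<lambda>\<omega>. (Z \<omega>, X \<omega>)) (c, a))"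
      unfolding pc_def by (rule point_prob_marginal[OF Z X]) (use fin A_def in auto)
    then show ?thesis
      unfolding pac_eq[symmetric] pac_def point_prob_def by (simp add: conj_commute)
  qed
  have range: "(\<lambda>\<omega>. (X \<omega>, Y \<omega>, Z \<omega>)) ` space M \<subseteq> A \<times> B \<times> C"
    unfolding A_def B_def C_def by auto
  have "discrete_entropy M (\<lambda>\<omega>. (X \<omega>, Y \<omega>, Z \<omega>)) = - (\<Sum>a\<in>A. \<Sum>b\<in>B. \<Sum>c\<in>C. p a b c * ln (p a b c))"
    using discrete_entropy_superset[OF _ range] fin unfolding p_def by (simp add: sum.cartesian_product)
  moreover have "discrete_entropy M (\<lambda>\<omega>. (X \<omega>, Z \<omega>)) = - (\<Sum>a\<in>A. \<Sum>c\<in>C. pac a c * ln (pac a c))"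
    using discrete_entropy_superset[of "A \<times> C" "\<lambda>\<omega>. (X \<omega>, Z \<omega>)"] fin unfolding pac_def
    by (auto simp: sum.cartesian_product A_def C_def)
  moreover have "discrete_entropy M (\<lambda>\<omega>. (Y \<omega>, Z \<omega>)) = - (\<Sum>b\<in>B. \<Sum>c\<in>C. pbc b c * ln (pbc b c))"
    using discrete_entropy_superset[of "B \<times> C" "\<lambda>\<omega>. (Y \<omega>, Z \<omega>)"] fin unfolding pbc_def
    by (auto simp: sum.cartesian_product B_def C_def)
  moreover have "discrete_entropy M Z = - (\<Sum>c\<in>C. pc c * ln (pc c))"
    using discrete_entropy_superset[of C Z] fin unfolding pc_def by (simp add: C_def)
  moreover have "(\<Sum>a\<in>A. \<Sum>c\<in>C. pac a c * ln (pac a c)) + (\<Sum>b\<in>B. \<Sum>c\<in>C. pbc b c * ln (pbc b c))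
      \<le> (\<Sum>a\<in>A. \<Sum>b\<in>B. \<Sum>c\<in>C. p a b c * ln (p a b c)) + (\<Sum>c\<in>C. pc c * ln (pc c))"
    by (rule sum_xlnx_submodular[OF fin _ pac_eq pbc_eq pc_eq]) (simp add: p_def)
  ultimately show ?thesis by linarith
qed

lemma discrete_entropy_le_pair:
  assumes X: "finite_rv M X" and Y: "finite_rv M Y"
  shows "discrete_entropy M Y \<le> discrete_entropy M (\<lambda>\<omega>. (X \<omega>, Y \<omega>))"
proof -
  have "discrete_entropy M (\<lambda>\<omega>. (X \<omega>, X \<omega>, Y \<omega>)) = discrete_entropy M (\<lambda>\<omega>. (X \<omega>, Y \<omega>))"
    by (rule discrete_entropy_inj[OF finite_rv_pair[OF X Y], where g="\<lambda>(x, y). (x, x, y)"])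
       (auto simp: inj_on_def)
  then show ?thesis using discrete_entropy_submodular[OF X X Y] by simp
qed

lemma discrete_cond_entropy_le_entropy:
  assumes X: "finite_rv M X" and Y: "finite_rv M Y"
  shows "discrete_cond_entropy M X Y \<le> discrete_entropy M X"
proof -
  have "discrete_entropy M (\<lambda>\<omega>. (X \<omega>, Y \<omega>, ())) = discrete_entropy M (\<lambda>\<omega>. (X \<omega>, Y \<omega>))"
    by (rule discrete_entropy_inj[OF finite_rv_pair[OF X Y], where g="\<lambda>(x, y). (x, y, ())"])
       (auto simp: inj_on_def)
  moreover have "discrete_entropy M (\<lambda>\<omega>. (X \<omega>, ())) = discrete_entropy M X"
    by (rule discrete_entropy_inj[OF X, where g="\<lambda>x. (x, ())"]) (auto simp: inj_on_def)
  moreover have "discrete_entropy M (\<lambda>\<omega>. (Y \<omega>, ())) = discrete_entropy M Y"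
    by (rule discrete_entropy_inj[OF Y, where g="\<lambda>x. (x, ())"]) (auto simp: inj_on_def)
  ultimately show ?thesis
    using discrete_entropy_submodular[OF X Y finite_rv_const[of "()"]]
    by (simp add: discrete_cond_entropy_def discrete_entropy_const)
qed

lemma discrete_cond_entropy_le_comp:
  assumes X: "finite_rv M X" and V: "finite_rv M V"
  shows "discrete_cond_entropy M X V \<le> discrete_cond_entropy M X (\<lambda>\<omega>. g (V \<omega>))"
proof -
  have "discrete_entropy M (\<lambda>\<omega>. (X \<omega>, V \<omega>, g (V \<omega>))) = discrete_entropy M (\<lambda>\<omega>. (X \<omega>, V \<omega>))"
    by (rule discrete_entropy_inj[OF finite_rv_pair[OF X V], where g="\<lambda>(x, v). (x, v, g v)"])
       (auto simp: inj_on_def)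
  moreover have "discrete_entropy M (\<lambda>\<omega>. (V \<omega>, g (V \<omega>))) = discrete_entropy M V"
    by (rule discrete_entropy_inj[OF V, where g="\<lambda>v. (v, g v)"]) (auto simp: inj_on_def)
  ultimately show ?thesis
    using discrete_entropy_submodular[OF X V finite_rv_comp[OF V, of g]] by (simp add: discrete_cond_entropy_def)
qed

lemma discrete_cond_entropy_bool_le:
  fixes Z W :: "'a \<Rightarrow> bool"
  assumes Z: "finite_rv M Z" and W: "finite_rv M W"
  shows "discrete_cond_entropy M Z W \<le> bin_entropy (point_prob M (\<lambda>\<omega>. Z \<omega> \<noteq> W \<omega>) True)"
proof -
  have D: "finite_rv M (\<lambda>\<omega>. Z \<omega> \<noteq> W \<omega>)"
    using finite_rv_comp[OF finite_rv_pair[OF Z W], of "\<lambda>(z, w). z \<noteq> w"] by simp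
  have "discrete_entropy M (\<lambda>\<omega>. (Z \<omega> \<noteq> W \<omega>, W \<omega>)) = discrete_entropy M (\<lambda>\<omega>. (Z \<omega>, W \<omega>))"
    by (rule discrete_entropy_inj[OF finite_rv_pair[OF Z W], where g="\<lambda>(z, w). (z \<noteq> w, w)"])
       (auto simp: inj_on_def)
  then show ?thesis
    using discrete_cond_entropy_le_entropy[OF D W] discrete_entropy_bool[OF D]
    by (simp add: discrete_cond_entropy_def)
qed

lemma discrete_cond_entropy_map_le:
  fixes Z :: "'k \<Rightarrow> 'a \<Rightarrow> 'z"
  assumes Z: "\<And>k. finite_rv M (Z k)" and V: "finite_rv M V"
  shows "discrete_cond_entropy M (\<lambda>\<omega>. map (\<lambda>k. Z k \<omega>) ks) V
    \<le> (\<Sum>k\<leftarrow>ks. discrete_cond_entropy M (Z k) (\<lambda>\<omega>. g k (V \<omega>)))"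
proof (induction ks)
  case Nil
  have "discrete_entropy M (\<lambda>\<omega>. ([] :: 'z list, V \<omega>)) = discrete_entropy M V"
    by (rule discrete_entropy_inj[OF V, where g="\<lambda>v. ([], v)"]) (auto simp: inj_on_def)
  then show ?case by (simp add: discrete_cond_entropy_def)
next
  case (Cons k ks)
  define R where "R = (\<lambda>\<omega>. map (\<lambda>k. Z k \<omega>) ks)"
  have R: "finite_rv M R" unfolding R_def by (rule finite_rv_map[OF Z])
  have "discrete_entropy M (\<lambda>\<omega>. (map (\<lambda>k. Z k \<omega>) (k # ks), V \<omega>))
      = discrete_entropy M (\<lambda>\<omega>. (Z k \<omega>, R \<omega>, V \<omega>))"
    by (rule discrete_entropy_inj[OF finite_rv_pair[OF Z finite_rv_pair[OF R V]], where g="\<lambda>(z, r, v). (z # r, v)"])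
       (auto simp: inj_on_def R_def)
  then show ?case
    using discrete_entropy_submodular[OF Z[of k] R V] discrete_cond_entropy_le_comp[OF Z V, of k "g k"] Cons.IH
    by (simp add: discrete_cond_entropy_def R_def)
qed

lemma discrete_cond_entropy_le_shared:
  assumes A: "finite_rv M A" and B: "finite_rv M B" and Z: "finite_rv M Z"
  shows "discrete_cond_entropy M A B + discrete_entropy M Z
    \<le> discrete_entropy M A + discrete_cond_entropy M Z A + discrete_cond_entropy M Z B"
proof -
  have AB: "finite_rv M (\<lambda>\<omega>. (A \<omega>, B \<omega>))" by (rule finite_rv_pair[OF A B])
  have "discrete_entropy M (\<lambda>\<omega>. (A \<omega>, B \<omega>, Z \<omega>)) = discrete_entropy M (\<lambda>\<omega>. (Z \<omega>, A \<omega>, B \<omega>))"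
    by (rule discrete_entropy_inj[OF finite_rv_pair[OF Z AB], where g="\<lambda>(z, a, b). (a, b, z)"])
       (auto simp: inj_on_def)
  then show ?thesis
    using discrete_entropy_submodular[OF A B Z] discrete_entropy_le_pair[OF Z AB]
      discrete_entropy_swap[OF A Z] discrete_entropy_swap[OF B Z]
    by (simp add: discrete_cond_entropy_def)
qed

lemma prob_fair_coin_vimage:
  assumes "Z \<in> M \<rightarrow>\<^sub>M count_space UNIV" and fair: "prob {\<omega>\<in>space M. Z \<omega>} = 1/2"
  shows "prob (Z -` {c} \<inter> space M) = 1/2"
proof -
  have "{\<omega>\<in>space M. Z \<omega>} \<in> events"
    using measurable_sets[OF assms(1), of "{True}"] by (simp add: vimage_def Int_def conj_commute)
  then have "prob (space M - {\<omega>\<in>space M. Z \<omega>}) = 1/2"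
    using fair by (simp add: prob_compl)
  moreover have "Z -` {c} \<inter> space M = (if c then {\<omega>\<in>space M. Z \<omega>} else space M - {\<omega>\<in>space M. Z \<omega>})"
    by auto
  ultimately show ?thesis using fair by simp
qed

lemma point_prob_fair_coins:
  fixes Z :: "'k \<Rightarrow> 'a \<Rightarrow> bool"
  assumes indep: "indep_vars (\<lambda>_. count_space UNIV) Z I"
    and fair: "\<And>k. k \<in> I \<Longrightarrow> prob {\<omega>\<in>space M. Z k \<omega>} = 1/2"
    and ks: "distinct ks" "set ks \<subseteq> I" and v: "length v = length ks"
  shows "point_prob M (\<lambda>\<omega>. map (\<lambda>k. Z k \<omega>) ks) v = (1/2) ^ length ks"
proof (cases "ks = []")
  case True
  then show ?thesis using v by (simp add: point_prob_def prob_space)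
next
  case False
  define A where "A k = {the (map_of (zip ks v) k)}" for k
  have "{\<omega>\<in>space M. map (\<lambda>k. Z k \<omega>) ks = v} = (\<Inter>k\<in>set ks. Z k -` A k \<inter> space M)"
    using map_eq_iff_map_of_zip[OF ks(1) v] False by (auto simp: A_def)
  moreover have "prob (\<Inter>k\<in>set ks. Z k -` A k \<inter> space M) = (\<Prod>k\<in>set ks. prob (Z k -` A k \<inter> space M))"
    using False ks by (intro indep_varsD[OF indep]) auto
  moreover have "prob (Z k -` A k \<inter> space M) = 1/2" if "k \<in> set ks" for k
    using indep fair ks that unfolding A_def indep_vars_def by (intro prob_fair_coin_vimage) auto
  ultimately show ?thesis using ks by (simp add: point_prob_def distinct_card)
qed

lemma discrete_entropy_fair_coins:
  fixes Z :: "'k \<Rightarrow> 'a \<Rightarrow> bool"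
  assumes indep: "indep_vars (\<lambda>_. count_space UNIV) Z I"
    and fair: "\<And>k. k \<in> I \<Longrightarrow> prob {\<omega>\<in>space M. Z k \<omega>} = 1/2"
    and ks: "distinct ks" "set ks \<subseteq> I"
  shows "discrete_entropy M (\<lambda>\<omega>. map (\<lambda>k. Z k \<omega>) ks) = real (length ks) * ln 2"
proof -
  note point_prob = point_prob_fair_coins[OF indep fair ks]
  define S where "S = {v :: bool list. length v = length ks}"
  have fin: "finite S" and card: "card S = 2 ^ length ks"
    unfolding S_def using card_lists_length_eq[of "UNIV :: bool set"] finite_lists_length_eq[of "UNIV :: bool set"]
    by auto
  have "discrete_entropy M (\<lambda>\<omega>. map (\<lambda>k. Z k \<omega>) ks)
      = - (\<Sum>v\<in>S. point_prob M (\<lambda>\<omega>. map (\<lambda>k. Z k \<omega>) ks) v * ln (point_prob M (\<lambda>\<omega>. map (\<lambda>k. Z k \<omega>) ks) v))"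
    using fin by (rule discrete_entropy_superset) (auto simp: S_def)
  also have "\<dots> = - (\<Sum>v\<in>S. (1/2) ^ length ks * ln ((1/2) ^ length ks))"
    unfolding S_def by (intro arg_cong[where f=uminus] sum.cong refl) (simp add: point_prob)
  also have "\<dots> = - (2 ^ length ks * ((1/2) ^ length ks * (real (length ks) * ln (1/2))))"
    by (simp add: card ln_realpow)
  also have "\<dots> = real (length ks) * ln 2"
    by (simp add: ln_div power_one_over)
  finally show ?thesis .
qed

end

section \<open>Binary entropy\<close>

lemma bin_entropy_sym: "bin_entropy (1 - p) = bin_entropy p"
  by (simp add: bin_entropy_def algebra_simps)

lemma bin_entropy_half: "bin_entropy (1/2) = ln 2"
  by (simp add: bin_entropy_def ln_div)

lemma bin_entropy_nonneg:
  assumes "0 \<le> p" "p \<le> 1"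
  shows "0 \<le> bin_entropy p"
proof -
  have "p * ln p \<le> 0" using assms by (cases "p = 0") (auto intro!: mult_nonneg_nonpos)
  moreover have "(1 - p) * ln (1 - p) \<le> 0" using assms by (cases "p = 1") (auto intro!: mult_nonneg_nonpos)
  ultimately show ?thesis by (simp add: bin_entropy_def)
qed

lemma bin_entropy_has_real_derivative:
  assumes "0 < x" "x < 1"
  shows "(bin_entropy has_real_derivative (ln (1 - x) - ln x)) (at x)"
proof -
  have "((\<lambda>x. - x * ln x - (1 - x) * ln (1 - x)) has_real_derivative
        (- (1 * ln x + x * (1 / x)) - ((-1) * ln (1 - x) + (1 - x) * ((-1) / (1 - x))))) (at x)"
    using assms by (auto intro!: derivative_eq_intros)
  moreover have "- (1 * ln x + x * (1 / x)) - ((-1) * ln (1 - x) + (1 - x) * ((-1) / (1 - x)))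
      = ln (1 - x) - ln x"
    using assms by (simp add: field_simps)
  ultimately show ?thesis unfolding bin_entropy_def[abs_def] by simp
qed

lemma bin_entropy_mono:
  assumes "0 \<le> p" "p \<le> q" "q \<le> 1/2"
  shows "bin_entropy p \<le> bin_entropy q"
proof (cases "p = 0")
  case True
  then show ?thesis using assms bin_entropy_nonneg[of q] by (simp add: bin_entropy_def)
next
  case False
  show ?thesis
  proof (rule DERIV_nonneg_imp_nondecreasing[OF assms(2)])
    fix x assume x: "p \<le> x" "x \<le> q"
    then have "0 < x" "x < 1" "ln x \<le> ln (1 - x)" using False assms by auto
    then show "\<exists>y. DERIV bin_entropy x :> y \<and> 0 \<le> y"
      using bin_entropy_has_real_derivative by (intro exI[of _ "ln (1 - x) - ln x"]) auto
  qed
qed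

lemma bin_entropy_less_ln2:
  assumes "1/2 < \<delta>" "\<delta> < 1"
  shows "bin_entropy \<delta> < ln 2"
proof -
  define c where "c = (1 - \<delta> + 1/2) / 2"
  have c: "1 - \<delta> < c" "c < 1/2" using assms by (auto simp: c_def)
  have "bin_entropy (1 - \<delta>) < bin_entropy c"
  proof (rule DERIV_pos_imp_increasing[OF c(1)])
    fix x assume x: "1 - \<delta> \<le> x" "x \<le> c"
    then have "0 < x" "x < 1" "ln x < ln (1 - x)" using assms c by auto
    then show "\<exists>y. DERIV bin_entropy x :> y \<and> 0 < y"
      using bin_entropy_has_real_derivative by (intro exI[of _ "ln (1 - x) - ln x"]) auto
  qed
  also have "bin_entropy c \<le> bin_entropy (1/2)"
    using c assms by (intro bin_entropy_mono) auto
  finally show ?thesis by (simp add: bin_entropy_sym bin_entropy_half)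
qed

lemma tendsto_bin_entropy_zero:
  assumes "\<And>m. 0 \<le> q m" and "q \<longlonglongrightarrow> 0"
  shows "(\<lambda>m. bin_entropy (q m)) \<longlonglongrightarrow> 0"
proof -
  have "(bin_entropy \<longlongrightarrow> 0) (at_right 0)"
    unfolding bin_entropy_def by real_asymp
  then have "continuous (at 0 within {0..}) bin_entropy"
    by (simp add: continuous_within at_within_Ici_at_right bin_entropy_def)
  then show ?thesis
    using continuous_within_tendsto_compose'[of 0 "{0..}" bin_entropy q] assms
    by (simp add: bin_entropy_def)
qed

context prob_space
begin

lemma binary_Fano_inequality:
  fixes Z :: "'a \<Rightarrow> bool"
  assumes Z: "finite_rv M Z" and V: "finite_rv M V"
  shows "discrete_cond_entropy M Z (\<lambda>\<omega>. s (V \<omega>)) \<le> bin_entropy (1 - prob {\<omega>\<in>space M. s (V \<omega>) = Z \<omega>})"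
proof -
  have "{\<omega>\<in>space M. s (V \<omega>) = Z \<omega>} \<in> events"
    using finite_rv_sets[OF finite_rv_comp[OF finite_rv_pair[OF V Z], of "\<lambda>(v, z). s v = z"], of True] by simp
  moreover have "{\<omega>\<in>space M. (Z \<omega> \<noteq> s (V \<omega>)) = True} = space M - {\<omega>\<in>space M. s (V \<omega>) = Z \<omega>}"
    by auto
  ultimately have "point_prob M (\<lambda>\<omega>. Z \<omega> \<noteq> s (V \<omega>)) True = 1 - prob {\<omega>\<in>space M. s (V \<omega>) = Z \<omega>}"
    by (simp add: point_prob_def prob_compl)
  then show ?thesis using discrete_cond_entropy_bool_le[OF Z finite_rv_comp[OF V, of s]] by simp
qed

lemma discrete_cond_entropy_guesses_le:
  fixes Z :: "'k \<Rightarrow> 'a \<Rightarrow> bool"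
  assumes Z: "\<And>k. finite_rv M (Z k)" and V: "finite_rv M V"
  shows "discrete_cond_entropy M (\<lambda>\<omega>. map (\<lambda>k. Z k \<omega>) ks) V
    \<le> (\<Sum>k\<leftarrow>ks. bin_entropy (1 - prob {\<omega>\<in>space M. s k (V \<omega>) = Z k \<omega>}))"
proof -
  have "(\<Sum>k\<leftarrow>ks. discrete_cond_entropy M (Z k) (\<lambda>\<omega>. s k (V \<omega>)))
      \<le> (\<Sum>k\<leftarrow>ks. bin_entropy (1 - prob {\<omega>\<in>space M. s k (V \<omega>) = Z k \<omega>}))"
    by (rule sum_list_mono) (rule binary_Fano_inequality[OF Z V])
  then show ?thesis
    using discrete_cond_entropy_map_le[where Z=Z and g=s and ks=ks, OF Z V] by linarith
qed

end

section \<open>Concave sequences\<close>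

lemma tendsto_Cesaro_mean:
  fixes d :: "nat \<Rightarrow> real"
  assumes "d \<longlonglongrightarrow> L"
  shows "(\<lambda>n. (\<Sum>i<n. d i) / real n) \<longlonglongrightarrow> L"
proof (rule LIMSEQ_I)
  fix r :: real assume r: "0 < r"
  obtain N where N: "\<And>i. N \<le> i \<Longrightarrow> \<bar>d i - L\<bar> < r / 2"
    using LIMSEQ_D[OF assms, of "r / 2"] r by auto
  define C where "C = (\<Sum>i<N. \<bar>d i - L\<bar>)"
  obtain N' :: nat where N': "2 * C / r < real N'" using reals_Archimedean2 by blast
  show "\<exists>no. \<forall>n\<ge>no. norm ((\<Sum>i<n. d i) / real n - L) < r"
  proof (intro exI allI impI)
    fix n assume n: "max (Suc N) N' \<le> n"
    then have n_pos: "0 < real n" by simp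
    have split: "{..<n} = {..<N} \<union> {N..<n}" using n by auto
    have "\<bar>\<Sum>i<n. d i - L\<bar> \<le> (\<Sum>i<n. \<bar>d i - L\<bar>)" by (rule sum_abs)
    also have "\<dots> = C + (\<Sum>i=N..<n. \<bar>d i - L\<bar>)"
      unfolding C_def split by (subst sum.union_disjoint) auto
    also have "(\<Sum>i=N..<n. \<bar>d i - L\<bar>) \<le> (\<Sum>i=N..<n. r / 2)"
      using N by (intro sum_mono) (auto intro: less_imp_le)
    also have "\<dots> \<le> real n * (r / 2)" using r by simp
    finally have "\<bar>\<Sum>i<n. d i - L\<bar> \<le> C + real n * (r / 2)" by simp
    moreover have "C < real n * (r / 2)"
    proof -
      have "2 * C / r < real n" using N' n by (simp add: less_le_trans)
      then show ?thesis using r by (simp add: field_simps)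
    qed
    moreover have "(\<Sum>i<n. d i) / real n - L = (\<Sum>i<n. d i - L) / real n"
      using n_pos by (simp add: sum_subtractf field_simps)
    ultimately show "norm ((\<Sum>i<n. d i) / real n - L) < r"
      using n_pos by (simp add: field_simps)
  qed
qed

lemma concave_sequence_rate:
  fixes H :: "nat \<Rightarrow> real"
  assumes H0: "H 0 = 0" and mono: "\<And>n. H n \<le> H (Suc n)"
    and concave: "\<And>n. H (Suc (Suc n)) + H n \<le> 2 * H (Suc n)"
  shows "\<exists>L. (\<lambda>n. H n / real n) \<longlonglongrightarrow> L \<and> (\<forall>n m. real n * L \<le> H (m + n) - H m)"
proof -
  define d where "d n = H (Suc n) - H n" for n
  have "decseq d" unfolding decseq_Suc_iff d_def using concave by (simp add: algebra_simps)
  moreover have "\<forall>i. 0 \<le> d i" using mono by (simp add: d_def)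
  ultimately obtain L where dL: "d \<longlonglongrightarrow> L" and L_le: "\<And>i. L \<le> d i"
    using decseq_convergent by blast
  have "H n = (\<Sum>i<n. d i)" for n
    unfolding d_def by (simp add: sum_lessThan_telescope H0)
  then have "(\<lambda>n. H n / real n) \<longlonglongrightarrow> L"
    using tendsto_Cesaro_mean[OF dL] by simp
  moreover have "real n * L \<le> H (m + n) - H m" for n m
  proof (induction n)
    case (Suc n)
    then show ?case using L_le[of "m + n"] by (simp add: d_def algebra_simps)
  qed simp
  ultimately show ?thesis by blast
qed

section \<open>Stationary and strongly nonergodic processes\<close>

lemma length_block [simp]: "length (block X t n \<omega>) = n"
  by (simp add: block_def)

lemma block_append: "block X t (a + b) \<omega> = block X t a \<omega> @ block X (t + int a) b \<omega>"
proof (induction b)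
  case (Suc b)
  have "block X t (a + Suc b) \<omega> = block X t (a + b) \<omega> @ [X (t + int (a + b + 1)) \<omega>]"
    "block X (t + int a) (Suc b) \<omega> = block X (t + int a) b \<omega> @ [X (t + int a + int (b + 1)) \<omega>]"
    by (simp_all add: block_def)
  then show ?case using Suc by (simp add: algebra_simps)
qed (simp add: block_def)

locale stationary_process = prob_space M
  for M :: "'w measure" and X :: "int \<Rightarrow> 'w \<Rightarrow> 'a::finite" +
  assumes X_measurable: "\<And>i. X i \<in> M \<rightarrow>\<^sub>M count_space UNIV"
    and stationary: "stationary M X"
begin

lemma finite_rv_block: "finite_rv M (block X t n)"
proof -
  have "finite_rv M (\<lambda>\<omega>. map (\<lambda>i. X (t + int i) \<omega>) [1..<n+1])"
    using finite_rv_map[OF finite_rv_measurable[OF X_measurable]] .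
  then show ?thesis by (simp add: block_def[abs_def])
qed

lemma block_entropy_eq_discrete_entropy: "block_entropy M X n = discrete_entropy M (block X t n)"
proof -
  have shift: "point_prob M (block X t n) xs = point_prob M (block X 0 n) xs" for xs
  proof -
    have "measure M {\<omega>\<in>space M. block X t n \<omega> \<in> {xs}} = measure M {\<omega>\<in>space M. block X 0 n \<omega> \<in> {xs}}"
      using stationary unfolding stationary_def by blast
    then show ?thesis by (simp add: point_prob_def)
  qed
  have fin: "finite {xs :: 'a list. length xs = n}"
    using finite_lists_length_eq[of "UNIV :: 'a set" n] by simp
  have "block_entropy M X n = - (\<integral>\<omega>. ln (point_prob M (block X 0 n) (block X 0 n \<omega>)) \<partial>M)"
    unfolding block_entropy_def point_prob_def ..
  also have "\<dots> = discrete_entropy M (block X 0 n)"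
    unfolding discrete_entropy_def by (subst integral_finite_rv[OF finite_rv_block]) simp
  also have "\<dots> = discrete_entropy M (block X t n)"
    by (subst (1 2) discrete_entropy_superset[OF fin]) (auto simp: shift)
  finally show ?thesis .
qed

lemma discrete_entropy_adjacent_blocks:
  "discrete_entropy M (\<lambda>\<omega>. (block X t a \<omega>, block X (t + int a) b \<omega>)) = block_entropy M X (a + b)"
proof -
  have "discrete_entropy M (block X t (a + b)) = discrete_entropy M (\<lambda>\<omega>. (block X t a \<omega>, block X (t + int a) b \<omega>))"
    by (rule discrete_entropy_inj[OF finite_rv_pair[OF finite_rv_block finite_rv_block], where g="\<lambda>(u, v). u @ v"])
       (auto simp: inj_on_def block_append)
  then show ?thesis by (simp add: block_entropy_eq_discrete_entropy[of _ t])
qed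

lemma block_entropy_0: "block_entropy M X 0 = 0"
proof -
  have "block X 0 0 = (\<lambda>\<omega>. [])" by (simp add: block_def fun_eq_iff)
  then show ?thesis by (simp add: block_entropy_eq_discrete_entropy[of 0 0] discrete_entropy_const)
qed

lemma block_entropy_le_Suc: "block_entropy M X n \<le> block_entropy M X (Suc n)"
  using discrete_entropy_le_pair[OF finite_rv_block[of 0 1] finite_rv_block[of 1 n]]
    discrete_entropy_adjacent_blocks[of 0 1 n] block_entropy_eq_discrete_entropy[of n 1]
  by simp

lemma block_entropy_concave: "block_entropy M X (Suc (Suc n)) + block_entropy M X n \<le> 2 * block_entropy M X (Suc n)"
proof -
  define U V W where "U = block X 0 1" and "V = block X 1 n" and "W = block X (1 + int n) 1"
  have U: "finite_rv M U" and V: "finite_rv M V" and W: "finite_rv M W"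
    unfolding U_def V_def W_def by (rule finite_rv_block)+
  have "discrete_entropy M (\<lambda>\<omega>. (U \<omega>, W \<omega>, V \<omega>)) = discrete_entropy M (block X 0 (1 + n + 1))"
  proof (rule discrete_entropy_inj[OF finite_rv_pair[OF U finite_rv_pair[OF W V]], where g="\<lambda>(u, w, v). u @ v @ w", symmetric])
    show "inj_on (\<lambda>(u, w, v). u @ v @ w) ((\<lambda>\<omega>. (U \<omega>, W \<omega>, V \<omega>)) ` space M)"
      by (auto simp: inj_on_def U_def V_def W_def)
    show "block X 0 (1 + n + 1) \<omega> = (case (U \<omega>, W \<omega>, V \<omega>) of (u, w, v) \<Rightarrow> u @ v @ w)" for \<omega>
      using block_append[of X 0 "1 + n" 1 \<omega>] block_append[of X 0 1 n \<omega>] by (simp add: U_def V_def W_def)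
  qed
  moreover have "discrete_entropy M (\<lambda>\<omega>. (U \<omega>, V \<omega>)) = block_entropy M X (1 + n)"
    using discrete_entropy_adjacent_blocks[of 0 1 n] by (simp add: U_def V_def)
  moreover have "discrete_entropy M (\<lambda>\<omega>. (W \<omega>, V \<omega>)) = block_entropy M X (n + 1)"
    using discrete_entropy_swap[OF V W] discrete_entropy_adjacent_blocks[of 1 n 1] by (simp add: V_def W_def)
  ultimately show ?thesis
    using discrete_entropy_submodular[OF U W V] block_entropy_eq_discrete_entropy[of n 1]
      block_entropy_eq_discrete_entropy[of "1 + n + 1" 0]
    by (simp add: V_def)
qed

lemma block_entropy_rate:
  shows "(\<lambda>n. block_entropy M X n / real n) \<longlonglongrightarrow> entropy_rate M X"
    and "real n * entropy_rate M X \<le> block_entropy M X (m + n) - block_entropy M X m"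
proof -
  obtain L where "(\<lambda>n. block_entropy M X n / real n) \<longlonglongrightarrow> L"
    and "\<forall>n m. real n * L \<le> block_entropy M X (m + n) - block_entropy M X m"
    using concave_sequence_rate[where H="block_entropy M X", OF block_entropy_0 block_entropy_le_Suc block_entropy_concave] by blast
  moreover have "entropy_rate M X = L"
    unfolding entropy_rate_def using calculation(1) by (rule limI)
  ultimately show "(\<lambda>n. block_entropy M X n / real n) \<longlonglongrightarrow> entropy_rate M X"
    and "real n * entropy_rate M X \<le> block_entropy M X (m + n) - block_entropy M X m"
    by simp_all
qed

end

locale strongly_nonergodic_process = stationary_process M X
  for M :: "'w measure" and X :: "int \<Rightarrow> 'w \<Rightarrow> 'a::finite" +
  fixes Z :: "nat \<Rightarrow> 'w \<Rightarrow> bool" and s :: "nat \<Rightarrow> 'a list \<Rightarrow> bool"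
  assumes Z_indep: "indep_vars (\<lambda>_. count_space UNIV) Z UNIV"
    and Z_fair: "\<And>k. prob {\<omega>\<in>space M. Z k \<omega>} = 1/2"
    and s_consistent: "\<And>k t. (\<lambda>n. prob {\<omega>\<in>space M. s k (block X t n \<omega>) = Z k \<omega>}) \<longlonglongrightarrow> 1"
begin

lemma finite_rv_Z: "finite_rv M (Z k)"
  using Z_indep unfolding indep_vars_def by (auto intro!: finite_rv_measurable)

lemma guessing_error_entropy_vanishes:
  "(\<lambda>m. \<Sum>k\<in>K. bin_entropy (1 - prob {\<omega>\<in>space M. s k (block X t m \<omega>) = Z k \<omega>})) \<longlonglongrightarrow> 0"
proof -
  have "(\<lambda>m. 1 - prob {\<omega>\<in>space M. s k (block X t m \<omega>) = Z k \<omega>}) \<longlonglongrightarrow> 1 - 1" for k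
    by (intro tendsto_intros s_consistent)
  then have "(\<lambda>m. bin_entropy (1 - prob {\<omega>\<in>space M. s k (block X t m \<omega>) = Z k \<omega>})) \<longlonglongrightarrow> 0" for k
    by (intro tendsto_bin_entropy_zero) simp_all
  then show ?thesis using tendsto_sum[of K] by fastforce
qed

lemma discrete_cond_entropy_U_delta_le:
  assumes ks: "distinct ks" "set ks \<subseteq> U_delta M X Z s \<delta> n" and \<delta>: "1/2 \<le> \<delta>"
  shows "discrete_cond_entropy M (\<lambda>\<omega>. map (\<lambda>k. Z k \<omega>) ks) (block X 0 n) \<le> real (length ks) * bin_entropy \<delta>"
proof -
  have "bin_entropy (1 - prob {\<omega>\<in>space M. s k (block X 0 n \<omega>) = Z k \<omega>}) \<le> bin_entropy \<delta>" if "k \<in> set ks" for k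
  proof -
    have "\<delta> \<le> prob {\<omega>\<in>space M. s k (block X 0 n \<omega>) = Z k \<omega>}" using ks that by (auto simp: U_delta_def)
    then have "bin_entropy (1 - prob {\<omega>\<in>space M. s k (block X 0 n \<omega>) = Z k \<omega>}) \<le> bin_entropy (1 - \<delta>)"
      using \<delta> by (intro bin_entropy_mono) auto
    then show ?thesis by (simp add: bin_entropy_sym)
  qed
  then have "(\<Sum>k\<in>set ks. bin_entropy (1 - prob {\<omega>\<in>space M. s k (block X 0 n \<omega>) = Z k \<omega>}))
      \<le> (\<Sum>k\<in>set ks. bin_entropy \<delta>)"
    by (rule sum_mono)
  then show ?thesis
    using discrete_cond_entropy_guesses_le[where Z=Z and s=s and ks=ks, OF finite_rv_Z finite_rv_block[of 0 n]] ks(1)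
    by (simp add: sum_list_distinct_conv_sum_set distinct_card)
qed

lemma excess_entropy_lower_bound:
  assumes ks: "distinct ks" "set ks \<subseteq> U_delta M X Z s \<delta> n" and \<delta>: "1/2 \<le> \<delta>"
  shows "real (length ks) * (ln 2 - bin_entropy \<delta>) \<le> block_entropy M X n - real n * entropy_rate M X"
proof -
  define A Zs where "A = block X 0 n" and "Zs = (\<lambda>\<omega>. map (\<lambda>k. Z k \<omega>) ks)"
  define err where "err m = (\<Sum>k\<in>set ks. bin_entropy (1 - prob {\<omega>\<in>space M. s k (block X n m \<omega>) = Z k \<omega>}))" for m
  have A: "finite_rv M A" and Zs: "finite_rv M Zs"
    unfolding A_def Zs_def by (rule finite_rv_block, rule finite_rv_map[OF finite_rv_Z])
  have HZs: "discrete_entropy M Zs = real (length ks) * ln 2"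
    unfolding Zs_def using ks(1) by (intro discrete_entropy_fair_coins[OF Z_indep Z_fair]) auto
  have HZsA: "discrete_cond_entropy M Zs A \<le> real (length ks) * bin_entropy \<delta>"
    unfolding Zs_def A_def using ks \<delta> by (rule discrete_cond_entropy_U_delta_le)
  have "real n * entropy_rate M X - block_entropy M X n - real (length ks) * (bin_entropy \<delta> - ln 2) \<le> err m" for m
  proof -
    define B where "B = block X n m"
    have B: "finite_rv M B" unfolding B_def by (rule finite_rv_block)
    have "discrete_cond_entropy M Zs B \<le> err m"
      using discrete_cond_entropy_guesses_le[where Z=Z and s=s and ks=ks, OF finite_rv_Z B] ks(1)
      by (simp add: Zs_def err_def B_def sum_list_distinct_conv_sum_set)
    moreover have "real n * entropy_rate M X \<le> discrete_cond_entropy M A B"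
      using block_entropy_rate(2)[of n m] discrete_entropy_adjacent_blocks[of 0 n m]
        block_entropy_eq_discrete_entropy[of m n]
      by (simp add: discrete_cond_entropy_def A_def B_def add.commute)
    ultimately show ?thesis
      using discrete_cond_entropy_le_shared[OF A B Zs] HZs HZsA block_entropy_eq_discrete_entropy[of n 0]
      by (simp add: A_def algebra_simps)
  qed
  then have "real n * entropy_rate M X - block_entropy M X n - real (length ks) * (bin_entropy \<delta> - ln 2) \<le> 0"
    using guessing_error_entropy_vanishes[where K="set ks" and t="int n"] unfolding err_def
    by (intro LIMSEQ_le_const) auto
  then show ?thesis by (simp add: algebra_simps)
qed

lemma U_delta_finite:
  assumes \<delta>: "1/2 < \<delta>" "\<delta> < 1"
  shows "finite (U_delta M X Z s \<delta> n)"
proof (rule ccontr)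
  define c where "c = ln 2 - bin_entropy \<delta>"
  have c: "0 < c" using bin_entropy_less_ln2[OF \<delta>] by (simp add: c_def)
  assume "infinite (U_delta M X Z s \<delta> n)"
  then obtain F where F: "finite F" "card F = nat \<lceil>(block_entropy M X n - real n * entropy_rate M X) / c\<rceil> + 1"
    "F \<subseteq> U_delta M X Z s \<delta> n"
    by (meson infinite_arbitrarily_large)
  then have "real (card F) * c \<le> block_entropy M X n - real n * entropy_rate M X"
    using excess_entropy_lower_bound[of "sorted_list_of_set F"] \<delta> by (simp add: c_def)
  moreover have "(block_entropy M X n - real n * entropy_rate M X) / c < real (card F)"
    using F(2) by linarith
  ultimately show False using c by (simp add: field_simps)
qed

lemma HU_le_block_entropy:
  assumes "1/2 < \<delta>" "\<delta> < 1"
  shows "HU M X Z s \<delta> n \<le> block_entropy M X n"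
  using excess_entropy_lower_bound[of "sorted_list_of_set (U_delta M X Z s \<delta> n)"] U_delta_finite assms
  by (simp add: HU_def algebra_simps)

lemma HU_rate:
  assumes "1/2 < \<delta>" "\<delta> < 1"
  shows "(\<lambda>n. HU M X Z s \<delta> n / real n) \<longlonglongrightarrow> entropy_rate M X"
proof (rule tendsto_sandwich[OF _ _ tendsto_const block_entropy_rate(1)])
  have "0 \<le> ln 2 - bin_entropy \<delta>" using bin_entropy_less_ln2[OF assms] by simp
  then show "\<forall>\<^sub>F n in sequentially. entropy_rate M X \<le> HU M X Z s \<delta> n / real n"
    by (intro eventually_sequentiallyI[of 1]) (simp add: HU_def field_simps mult_right_mono)
  show "\<forall>\<^sub>F n in sequentially. HU M X Z s \<delta> n / real n \<le> block_entropy M X n / real n"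
    using HU_le_block_entropy[OF assms] by (intro always_eventually allI divide_right_mono) simp_all
qed

end

theorem theorem8:
  fixes M :: "'w measure" and X :: "int \<Rightarrow> 'w \<Rightarrow> 'a::finite"
    and Z :: "nat \<Rightarrow> 'w \<Rightarrow> bool" and s :: "nat \<Rightarrow> 'a list \<Rightarrow> bool" and \<delta> :: real
  assumes "prob_space M"
    and "\<And>i. X i \<in> M \<rightarrow>\<^sub>M count_space UNIV"
    and "stationary M X"
    and "prob_space.indep_vars M (\<lambda>_. count_space UNIV) Z UNIV"
    and "\<And>k. measure M {\<omega>\<in>space M. Z k \<omega>} = 1/2"
    and "\<And>k t. (\<lambda>n. measure M {\<omega>\<in>space M. s k (block X t n \<omega>) = Z k \<omega>}) \<longlonglongrightarrow> 1"
    and "1/2 < \<delta>" and "\<delta> < 1"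
  shows "(\<forall>n. finite (U_delta M X Z s \<delta> n) \<and> block_entropy M X n \<ge> HU M X Z s \<delta> n)
       \<and> (\<lambda>n. block_entropy M X n / real n) \<longlonglongrightarrow> entropy_rate M X
       \<and> (\<lambda>n. HU M X Z s \<delta> n / real n) \<longlonglongrightarrow> entropy_rate M X"
proof -
  interpret strongly_nonergodic_process M X Z s
    using assms(1-6) by (simp add: strongly_nonergodic_process_def stationary_process_def
        strongly_nonergodic_process_axioms_def stationary_process_axioms_def)
  show ?thesis
    using U_delta_finite HU_le_block_entropy block_entropy_rate(1) HU_rate assms(7,8) by blast
qed

end
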